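(* Let $A\in\mathbb{R}^{s\times s}$ and $b\in\mathbb{R}^s$ be the coefficients of an $s$-stage Runge–Kutta scheme with $c=Ae$, $e=(1,\dots,1)^T$, and let $\tilde q\ge 1$ be an integer. For $j\ge1$ define $g^{(j)}(\zeta)=\zeta\, b^T (I-\zeta A)^{-1}\tau^{(j)}$. Then $g^{(j)}(\zeta)=0$ for all $\zeta>0$ for which $I-\zeta A$ is invertible and all $1\le j\le \tilde q$, if and only if the scheme has weak stage order $\tilde q$.
   Context: Powers of vectors are componentwise. The stage order vectors are $\tau^{(j)} = A c^{j-1} - \tfrac{1}{j}c^{j}$, $j=1,2,\dots$. The scheme is said to have weak stage order $\tilde q$ if there exists a subspace $V\subseteq\mathbb{R}^s$ with $AV\subseteq V$, $b^T v=0$ for all $v\in V$, and $\tau^{(j)}\in V$ for all $1\le j\le\tilde q$. *)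

theory Defs
  imports "HOL-Analysis.Analysis"
begin

text \<open>Runge--Kutta data: A is an s-by-s real matrix, b a real s-vector; the number of
stages s is the finite index type 's.\<close>

definition ones :: "real ^ 's" where
  "ones = (\<chi> i. 1)"

definition rk_c :: "real ^ 's ^ 's \<Rightarrow> real ^ 's" where
  "rk_c A = A *v ones"

definition cpow :: "real ^ 's \<Rightarrow> nat \<Rightarrow> real ^ 's" where
  "cpow v k = (\<chi> i. (v $ i) ^ k)"

definition tau :: "real ^ 's ^ 's \<Rightarrow> nat \<Rightarrow> real ^ 's" where
  "tau A j = A *v cpow (rk_c A) (j - 1) - (1 / real j) *\<^sub>R cpow (rk_c A) j"

definition gfun :: "real ^ 's ^ 's \<Rightarrow> real ^ 's \<Rightarrow> nat \<Rightarrow> real \<Rightarrow> real" where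
  "gfun A b j \<zeta> = \<zeta> * (b \<bullet> (matrix_inv (mat 1 - \<zeta> *\<^sub>R A) *v tau A j))"

definition weak_stage_order :: "real ^ 's ^ 's \<Rightarrow> real ^ 's \<Rightarrow> nat \<Rightarrow> bool" where
  "weak_stage_order A b q \<longleftrightarrow>
     (\<exists>V :: (real ^ 's) set. subspace V \<and> (\<forall>v\<in>V. A *v v \<in> V) \<and> (\<forall>v\<in>V. b \<bullet> v = 0)
        \<and> (\<forall>j. 1 \<le> j \<and> j \<le> q \<longrightarrow> tau A j \<in> V))"

end

theory Submission
  imports Defs
begin

text \<open>Write \<open>R\<^sub>\<zeta> = (I - \<zeta> A)\<^sup>-\<^sup>1\<close>. If an \<open>A\<close>-invariant subspace \<open>V \<subseteq> b\<^sup>\<bottom>\<close> contains the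
  stage order vectors \<open>\<tau>\<^sub>j\<close>, then \<open>V\<close> is also invariant under \<open>I - \<zeta> A\<close> and hence, being
  finite-dimensional, under \<open>R\<^sub>\<zeta>\<close>; so \<open>b\<^sup>T R\<^sub>\<zeta> \<tau>\<^sub>j = 0\<close>. Conversely, let \<open>V\<close> be the span of
  all vectors \<open>R\<^sub>\<zeta> \<tau>\<^sub>j\<close> with \<open>\<zeta> > 0\<close>, which lies in \<open>b\<^sup>\<bottom>\<close> by hypothesis. Since
  \<open>\<parallel>R\<^sub>\<zeta> t - t\<parallel> = O(\<zeta>)\<close> and \<open>V\<close> is closed, \<open>V\<close> contains the \<open>\<tau>\<^sub>j\<close>; the resolvent equation
  \<open>\<zeta> A R\<^sub>\<zeta> t = R\<^sub>\<zeta> t - t\<close> then shows that \<open>V\<close> is \<open>A\<close>-invariant.\<close>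

lemma invertible_matrix_inv:
  fixes M :: "'a::semiring_1 ^ 'n ^ 'm"
  assumes "invertible M"
  shows "M ** matrix_inv M = mat 1" and "matrix_inv M ** M = mat 1"
proof -
  have "\<exists>M'. M ** M' = mat 1 \<and> M' ** M = mat 1"
    using assms by (simp add: invertible_def)
  then have "M ** matrix_inv M = mat 1 \<and> matrix_inv M ** M = mat 1"
    unfolding matrix_inv_def by (rule someI_ex)
  then show "M ** matrix_inv M = mat 1" and "matrix_inv M ** M = mat 1"
    by auto
qed

lemma matrix_vector_mul_matrix_inv:
  fixes M :: "'a::comm_semiring_1 ^ 'n ^ 'm"
  assumes "invertible M"
  shows "M *v (matrix_inv M *v x) = x" and "matrix_inv M *v (M *v y) = y"
  using invertible_matrix_inv[OF assms] by (simp_all add: matrix_vector_mul_assoc)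

lemma matrix_inv_vector_in_invariant_subspace:
  fixes M :: "real ^ 'n ^ 'n"
  assumes "invertible M" "subspace V" "\<And>v. v \<in> V \<Longrightarrow> M *v v \<in> V" "t \<in> V"
  shows "matrix_inv M *v t \<in> V"
proof -
  have "inj ((*v) M)"
    using assms(1) by (rule inj_matrix_vector_mult)
  then have "dim ((*v) M ` V) = dim V"
    by (simp add: dim_image_eq inj_on_def inj_def)
  moreover have "subspace ((*v) M ` V)"
    using assms(2) by (simp add: linear_subspace_image)
  moreover have "(*v) M ` V \<subseteq> V"
    using assms(3) by auto
  ultimately have "(*v) M ` V = V"
    using subspace_dim_equal[OF _ assms(2)] by auto
  then obtain y where "y \<in> V" "t = M *v y"
    using assms(4) by force
  then show ?thesis
    using matrix_vector_mul_matrix_inv[OF assms(1)] by simp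
qed

lemma identity_minus_scaleR_matrix_vector_mult:
  fixes A :: "real ^ 'n ^ 'n"
  shows "(mat 1 - \<zeta> *\<^sub>R A) *v x = x - \<zeta> *\<^sub>R (A *v x)"
  by (simp add: matrix_vector_mult_diff_rdistrib scaleR_matrix_vector_assoc)

lemma resolvent_equation:
  fixes A :: "real ^ 'n ^ 'n"
  assumes "invertible (mat 1 - \<zeta> *\<^sub>R A)"
  shows "\<zeta> *\<^sub>R (A *v (matrix_inv (mat 1 - \<zeta> *\<^sub>R A) *v t)) = matrix_inv (mat 1 - \<zeta> *\<^sub>R A) *v t - t"
proof -
  have "matrix_inv (mat 1 - \<zeta> *\<^sub>R A) *v t - \<zeta> *\<^sub>R (A *v (matrix_inv (mat 1 - \<zeta> *\<^sub>R A) *v t)) = t"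
    using matrix_vector_mul_matrix_inv(1)[OF assms, of t]
    by (simp only: identity_minus_scaleR_matrix_vector_mult)
  then show ?thesis
    by (simp add: algebra_simps)
qed

lemma invertible_identity_minus_small:
  fixes A :: "real ^ 'n ^ 'n"
  assumes K: "\<And>x. norm (A *v x) \<le> K * norm x" and small: "\<bar>\<zeta>\<bar> * K < 1"
  shows "invertible (mat 1 - \<zeta> *\<^sub>R A)"
proof -
  have "x = 0" if "(mat 1 - \<zeta> *\<^sub>R A) *v x = 0" for x
  proof -
    have "x = \<zeta> *\<^sub>R (A *v x)"
      using that by (simp add: identity_minus_scaleR_matrix_vector_mult)
    then have "norm x = \<bar>\<zeta>\<bar> * norm (A *v x)"
      by (metis norm_scaleR)
    also have "\<dots> \<le> (\<bar>\<zeta>\<bar> * K) * norm x"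
      using K[of x] by (simp add: mult_left_mono mult.assoc)
    finally show "x = 0"
      using small by (metis mult_le_cancel_right1 norm_le_zero_iff not_le)
  qed
  then show ?thesis
    using invertible_left_inverse matrix_left_invertible_ker by blast
qed

lemma resolvent_distance_le:
  fixes A :: "real ^ 'n ^ 'n"
  assumes "0 \<le> K" and K: "\<And>x. norm (A *v x) \<le> K * norm x" and small: "\<bar>\<zeta>\<bar> * K \<le> 1/2"
    and inv: "invertible (mat 1 - \<zeta> *\<^sub>R A)"
  shows "norm (matrix_inv (mat 1 - \<zeta> *\<^sub>R A) *v t - t) \<le> 2 * (\<bar>\<zeta>\<bar> * K) * norm t"
proof -
  define y where "y = matrix_inv (mat 1 - \<zeta> *\<^sub>R A) *v t"
  have "norm (y - t) = \<bar>\<zeta>\<bar> * norm (A *v y)"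
    using resolvent_equation[OF inv, of t] by (metis y_def norm_scaleR)
  also have "\<dots> \<le> (\<bar>\<zeta>\<bar> * K) * norm y"
    using K[of y] by (simp add: mult_left_mono mult.assoc)
  finally have dist_y: "norm (y - t) \<le> (\<bar>\<zeta>\<bar> * K) * norm y" .
  have "norm y \<le> norm t + norm (y - t)"
    by (metis norm_triangle_sub)
  also have "\<dots> \<le> norm t + norm y / 2"
    using dist_y small mult_right_mono[OF small norm_ge_zero[of y]] by linarith
  finally have "norm y \<le> 2 * norm t"
    by simp
  then have "(\<bar>\<zeta>\<bar> * K) * norm y \<le> (\<bar>\<zeta>\<bar> * K) * (2 * norm t)"
    using \<open>0 \<le> K\<close> by (simp add: mult_left_mono)
  then show ?thesis
    using dist_y unfolding y_def by simp
qed

lemma resolvent_tendsto_identity: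
  fixes A :: "real ^ 'n ^ 'n"
  shows "eventually (\<lambda>\<zeta>. invertible (mat 1 - \<zeta> *\<^sub>R A)) (at 0)"
    and "((\<lambda>\<zeta>. matrix_inv (mat 1 - \<zeta> *\<^sub>R A) *v t) \<longlongrightarrow> t) (at 0)"
proof -
  obtain K where "K > 0" and K_bound: "\<And>x. norm (A *v x) \<le> norm x * K"
    using bounded_linear.pos_bounded[OF matrix_vector_mul_bounded_linear[of A]] by blast
  have K: "norm (A *v x) \<le> K * norm x" for x
    using K_bound[of x] by (simp only: mult.commute)
  have scale_tendsto: "((\<lambda>\<zeta>. \<bar>\<zeta>\<bar> * K) \<longlongrightarrow> 0) (at 0)"
  proof -
    have "((\<lambda>\<zeta>. \<bar>\<zeta>\<bar> * K) \<longlongrightarrow> \<bar>0\<bar> * K) (at 0)"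
      by (intro tendsto_intros)
    then show ?thesis
      by simp
  qed
  have small: "eventually (\<lambda>\<zeta>. \<bar>\<zeta>\<bar> * K \<le> 1/2) (at 0)"
    using order_tendstoD(2)[OF scale_tendsto, of "1/2"] by (auto elim: eventually_mono)
  then show inv: "eventually (\<lambda>\<zeta>. invertible (mat 1 - \<zeta> *\<^sub>R A)) (at 0)"
    by eventually_elim (rule invertible_identity_minus_small[OF K], linarith)
  have "((\<lambda>\<zeta>. matrix_inv (mat 1 - \<zeta> *\<^sub>R A) *v t - t) \<longlongrightarrow> 0) (at 0)"
  proof (rule Lim_null_comparison)
    show "eventually (\<lambda>\<zeta>. norm (matrix_inv (mat 1 - \<zeta> *\<^sub>R A) *v t - t)
        \<le> 2 * (\<bar>\<zeta>\<bar> * K) * norm t) (at 0)"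
      using small inv by eventually_elim (rule resolvent_distance_le[OF less_imp_le[OF \<open>K > 0\<close>] K])
    show "((\<lambda>\<zeta>. 2 * (\<bar>\<zeta>\<bar> * K) * norm t) \<longlongrightarrow> 0) (at 0)"
      using tendsto_mult_left_zero[OF tendsto_mult_right_zero[OF scale_tendsto]] by simp
  qed
  then show "((\<lambda>\<zeta>. matrix_inv (mat 1 - \<zeta> *\<^sub>R A) *v t) \<longlongrightarrow> t) (at 0)"
    by (rule LIM_zero_cancel)
qed

lemma resolvent_limit_in_closed_set:
  fixes A :: "real ^ 'n ^ 'n"
  assumes "closed C"
    and "\<And>\<zeta>. 0 < \<zeta> \<Longrightarrow> invertible (mat 1 - \<zeta> *\<^sub>R A) \<Longrightarrow> matrix_inv (mat 1 - \<zeta> *\<^sub>R A) *v t \<in> C"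
  shows "t \<in> C"
proof (rule Lim_in_closed_set[OF \<open>closed C\<close>])
  have "eventually (\<lambda>\<zeta>. 0 < \<zeta> \<and> invertible (mat 1 - \<zeta> *\<^sub>R A)) (at_right 0)"
    using resolvent_tendsto_identity(1)[of A]
    by (simp add: eventually_at_split eventually_conj eventually_at_right_less)
  then show "eventually (\<lambda>\<zeta>. matrix_inv (mat 1 - \<zeta> *\<^sub>R A) *v t \<in> C) (at_right 0)"
    by eventually_elim (use assms(2) in blast)
  show "((\<lambda>\<zeta>. matrix_inv (mat 1 - \<zeta> *\<^sub>R A) *v t) \<longlongrightarrow> t) (at_right 0)"
    using resolvent_tendsto_identity(2) filterlim_at_split by blast
qed simp

lemma invariant_subspace_imp_resolvent_orthogonal:
  fixes A :: "real ^ 'n ^ 'n"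
  assumes "subspace V" "\<And>v. v \<in> V \<Longrightarrow> A *v v \<in> V" "\<And>v. v \<in> V \<Longrightarrow> b \<bullet> v = 0"
    and "t \<in> V" "invertible (mat 1 - \<zeta> *\<^sub>R A)"
  shows "b \<bullet> (matrix_inv (mat 1 - \<zeta> *\<^sub>R A) *v t) = 0"
proof -
  have "(mat 1 - \<zeta> *\<^sub>R A) *v v \<in> V" if "v \<in> V" for v
    using assms(1,2) that
    by (simp add: identity_minus_scaleR_matrix_vector_mult subspace_diff subspace_scale)
  then have "matrix_inv (mat 1 - \<zeta> *\<^sub>R A) *v t \<in> V"
    using matrix_inv_vector_in_invariant_subspace assms(1,4,5) by blast
  then show ?thesis
    using assms(3) by blast
qed

lemma resolvent_orthogonal_imp_invariant_subspace:
  fixes A :: "real ^ 'n ^ 'n"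
  assumes orth: "\<And>\<zeta> t. 0 < \<zeta> \<Longrightarrow> invertible (mat 1 - \<zeta> *\<^sub>R A) \<Longrightarrow> t \<in> T \<Longrightarrow>
      b \<bullet> (matrix_inv (mat 1 - \<zeta> *\<^sub>R A) *v t) = 0"
  obtains V where "subspace V" "\<And>v. v \<in> V \<Longrightarrow> A *v v \<in> V" "\<And>v. v \<in> V \<Longrightarrow> b \<bullet> v = 0"
    and "T \<subseteq> V"
proof -
  define S where "S = {matrix_inv (mat 1 - \<zeta> *\<^sub>R A) *v t | \<zeta> t.
    0 < \<zeta> \<and> invertible (mat 1 - \<zeta> *\<^sub>R A) \<and> t \<in> T}"
  define V where "V = span S"
  have "subspace V"
    unfolding V_def by (rule subspace_span)
  have "S \<subseteq> {v. b \<bullet> v = 0}"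
    using orth unfolding S_def by blast
  then have V_orth: "V \<subseteq> {v. b \<bullet> v = 0}"
    unfolding V_def using span_minimal subspace_hyperplane by blast
  have T_V: "t \<in> V" if "t \<in> T" for t
    using closed_subspace[OF \<open>subspace V\<close>]
    by (rule resolvent_limit_in_closed_set) (use that in \<open>auto simp: V_def S_def intro: span_base\<close>)
  have "S \<subseteq> {v. A *v v \<in> V}"
  proof
    fix x
    assume "x \<in> S"
    then obtain \<zeta> t where x: "x = matrix_inv (mat 1 - \<zeta> *\<^sub>R A) *v t"
      and "0 < \<zeta>" "invertible (mat 1 - \<zeta> *\<^sub>R A)" "t \<in> T"
      unfolding S_def by blast
    then have "\<zeta> *\<^sub>R (A *v x) = x - t"
      using resolvent_equation by blast
    then have "(1 / \<zeta>) *\<^sub>R (x - t) = (1 / \<zeta> * \<zeta>) *\<^sub>R (A *v x)"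
      by (simp only: scaleR_scaleR[symmetric])
    then have "A *v x = (1 / \<zeta>) *\<^sub>R (x - t)"
      using \<open>0 < \<zeta>\<close> by simp
    moreover have "x \<in> V"
      unfolding V_def using \<open>x \<in> S\<close> by (rule span_base)
    ultimately show "x \<in> {v. A *v v \<in> V}"
      using T_V[OF \<open>t \<in> T\<close>] \<open>subspace V\<close> by (simp add: subspace_diff subspace_scale)
  qed
  moreover have "subspace {v. A *v v \<in> V}"
    using \<open>subspace V\<close> by (rule linear_subspace_linear_preimage[OF matrix_vector_mul_linear])
  ultimately have "V \<subseteq> {v. A *v v \<in> V}"
    unfolding V_def by (rule span_minimal)
  with \<open>subspace V\<close> V_orth T_V show ?thesis
    using that by blast
qed

theorem theorem2:
  fixes A :: "real ^ 's ^ 's" and b :: "real ^ 's" and q :: nat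
  assumes "q \<ge> 1"
  shows "(\<forall>\<zeta>>0. invertible (mat 1 - \<zeta> *\<^sub>R A) \<longrightarrow>
            (\<forall>j. 1 \<le> j \<and> j \<le> q \<longrightarrow> gfun A b j \<zeta> = 0))
         \<longleftrightarrow> weak_stage_order A b q"
proof
  assume "\<forall>\<zeta>>0. invertible (mat 1 - \<zeta> *\<^sub>R A) \<longrightarrow>
            (\<forall>j. 1 \<le> j \<and> j \<le> q \<longrightarrow> gfun A b j \<zeta> = 0)"
  then have "b \<bullet> (matrix_inv (mat 1 - \<zeta> *\<^sub>R A) *v t) = 0"
    if "0 < \<zeta>" "invertible (mat 1 - \<zeta> *\<^sub>R A)" "t \<in> tau A ` {1..q}" for \<zeta> t
    using that by (auto simp: gfun_def)
  then obtain V where "subspace V" "\<And>v. v \<in> V \<Longrightarrow> A *v v \<in> V"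
      "\<And>v. v \<in> V \<Longrightarrow> b \<bullet> v = 0" "tau A ` {1..q} \<subseteq> V"
    using resolvent_orthogonal_imp_invariant_subspace by blast
  then have "subspace V \<and> (\<forall>v\<in>V. A *v v \<in> V) \<and> (\<forall>v\<in>V. b \<bullet> v = 0) \<and>
      (\<forall>j. 1 \<le> j \<and> j \<le> q \<longrightarrow> tau A j \<in> V)"
    by (auto simp: image_subset_iff)
  then show "weak_stage_order A b q"
    unfolding weak_stage_order_def by blast
next
  assume "weak_stage_order A b q"
  then obtain V where "subspace V" "\<And>v. v \<in> V \<Longrightarrow> A *v v \<in> V" "\<And>v. v \<in> V \<Longrightarrow> b \<bullet> v = 0"
      "\<And>j. 1 \<le> j \<Longrightarrow> j \<le> q \<Longrightarrow> tau A j \<in> V"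
    unfolding weak_stage_order_def by blast
  then show "\<forall>\<zeta>>0. invertible (mat 1 - \<zeta> *\<^sub>R A) \<longrightarrow>
      (\<forall>j. 1 \<le> j \<and> j \<le> q \<longrightarrow> gfun A b j \<zeta> = 0)"
    by (simp add: gfun_def invariant_subspace_imp_resolvent_orthogonal)
qed

end
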